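(* Let $V$ be a finite set, $h:2^V\to\mathbb{R}_{\ge0}$ a non-negative submodular function, $a\in\mathbb{R}^V$ with $\max_ia_i>0$, $f(\delta):=\min_{S\subseteq V}h_\delta(S)$ with $h_\delta(S):=h(S)-\delta a(S)$, and $\delta^*$ the largest root of $f$. Let $\delta^{(1)}>\dots>\delta^{(\ell)}=\delta^*$ be the iterates of the look-ahead Newton–Dinkelbach method on $f$ (with the initialization in the context), and for $i\in[\ell]$ let $S^{(i)}\in\operatorname{argmax}\{a(S): S\in\operatorname{argmin}_{T\subseteq V}h_{\delta^{(i)}}(T)\}$. Let $q:=\lfloor(\ell+3)/4\rfloor$ and $T_i:=S^{(\ell-4(i-1))}$ for $i\in[q]$. Then $h_{\delta^*}$ is a non-negative submodular function, the sets $T_1,\dots,T_q$ are distinct, and $h_{\delta^*}(T_{i+1})>4h_{\delta^*}(T_i)$ for all $i\in[q-1]$.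
   Context: $a(S):=\sum_{i\in S}a_i$. Supergradients of $f$ at $\delta$ are obtained as $-a(S)$ for minimizers $S$ of $h_\delta$. Initialization: $\delta^{(1)}:=\min\{h(\{i\})/a_i: a_i>0\}$; if $f(\delta^{(1)})=0$ stop; otherwise $g^{(1)}:=-a(S)$ for a minimizer $S$ of $h_{\delta^{(1)}}$ (then $g^{(1)}<0$). Look-ahead Newton–Dinkelbach method: for $i=1,2,\dots$: if $f(\delta^{(i)})=0$ return $\delta^{(i)}$; else $\delta:=\delta^{(i)}-f(\delta^{(i)})/g^{(i)}$ with a supergradient $g$ at $\delta$; return NO ROOT if $f(\delta)<0$ and $g\ge0$; let $\delta':=2\delta-\delta^{(i)}$ with supergradient $g'$; if $f(\delta')<0$ and $g'<0$ replace $(\delta,g)$ by $(\delta',g')$; set $\delta^{(i+1)}:=\delta$, $g^{(i+1)}:=g$. *)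

theory Defs
  imports Main "HOL.Real"
begin

definition asum :: "('v \<Rightarrow> real) \<Rightarrow> 'v set \<Rightarrow> real" where
  "asum a S = (\<Sum>i\<in>S. a i)"

definition hdelta :: "('v set \<Rightarrow> real) \<Rightarrow> ('v \<Rightarrow> real) \<Rightarrow> real \<Rightarrow> 'v set \<Rightarrow> real" where
  "hdelta h a d S = h S - d * asum a S"

definition fval :: "'v set \<Rightarrow> ('v set \<Rightarrow> real) \<Rightarrow> ('v \<Rightarrow> real) \<Rightarrow> real \<Rightarrow> real" where
  "fval V h a d = Min (hdelta h a d ` Pow V)"

definition is_minimizer :: "'v set \<Rightarrow> ('v set \<Rightarrow> real) \<Rightarrow> ('v \<Rightarrow> real) \<Rightarrow> real \<Rightarrow> 'v set \<Rightarrow> bool" where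
  "is_minimizer V h a d S \<longleftrightarrow> S \<subseteq> V \<and> (\<forall>T. T \<subseteq> V \<longrightarrow> hdelta h a d S \<le> hdelta h a d T)"

definition submodular_on :: "'v set \<Rightarrow> ('v set \<Rightarrow> real) \<Rightarrow> bool" where
  "submodular_on V g \<longleftrightarrow>
     (\<forall>S T. S \<subseteq> V \<longrightarrow> T \<subseteq> V \<longrightarrow> g (S \<union> T) + g (S \<inter> T) \<le> g S + g T)"

definition nonneg_on :: "'v set \<Rightarrow> ('v set \<Rightarrow> real) \<Rightarrow> bool" where
  "nonneg_on V g \<longleftrightarrow> (\<forall>S. S \<subseteq> V \<longrightarrow> 0 \<le> g S)"

text \<open>A terminating run of the look-ahead Newton-Dinkelbach method that returns a root,
  with iterates ds 1, ..., ds l and supergradients gs 1, ..., gs l. Supergradients are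
  of the form -a(S) for a minimizer S of h_delta (choices are existential).\<close>
definition lnd_run :: "'v set \<Rightarrow> ('v set \<Rightarrow> real) \<Rightarrow> ('v \<Rightarrow> real) \<Rightarrow> nat
    \<Rightarrow> (nat \<Rightarrow> real) \<Rightarrow> (nat \<Rightarrow> real) \<Rightarrow> bool" where
  "lnd_run V h a l ds gs \<longleftrightarrow>
     1 \<le> l \<and>
     ds 1 = Min {h {i} / a i | i. i \<in> V \<and> 0 < a i} \<and>
     (fval V h a (ds 1) \<noteq> 0 \<longrightarrow>
        (\<exists>S. is_minimizer V h a (ds 1) S \<and> gs 1 = - asum a S)) \<and>
     (\<forall>i\<in>{1..<l}. fval V h a (ds i) \<noteq> 0) \<and>
     fval V h a (ds l) = 0 \<and>
     (\<forall>i\<in>{1..<l}. \<exists>S S'.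
        let d = ds i - fval V h a (ds i) / gs i;
            d' = 2 * d - ds i;
            g = - asum a S;
            g' = - asum a S'
        in is_minimizer V h a d S \<and> is_minimizer V h a d' S' \<and>
           \<not> (fval V h a d < 0 \<and> 0 \<le> g) \<and>
           (if fval V h a d' < 0 \<and> g' < 0
            then ds (Suc i) = d' \<and> gs (Suc i) = g'
            else ds (Suc i) = d \<and> gs (Suc i) = g))"

end

theory Submission
  imports Defs Complex_Main
begin

text \<open>
  Write \<open>x_k = delta_k - delta*\<close> for the distance of the \<open>k\<close>-th iterate to the root and
  \<open>s_k = -g_k > 0\<close> for its slope, the \<open>a\<close>-value of some minimiser of \<open>h_delta_k\<close>.
  Minimisers at larger \<open>delta\<close> have larger \<open>a\<close>-value, and \<open>S_k\<close> maximises \<open>a\<close> among the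
  minimisers of \<open>h_delta_k\<close>; hence \<open>h_delta*(S_k) = f(delta_k) + x_k a(S_k)\<close> lies between
  \<open>s_k x_(k+1)\<close> and \<open>s_(k-1) x_k\<close>. Every step at least halves \<open>x_k s_k\<close>: an accepted
  look-ahead point halves the slope, and a rejected one lies at or left of \<open>delta*\<close> (to the
  right of \<open>delta*\<close> the value of \<open>f\<close> is negative and minimisers have positive \<open>a\<close>-value),
  which halves \<open>x_k\<close>. Over four steps this gives \<open>h_delta*(S_(k+4)) < h_delta*(S_k) / 4\<close>; as
  \<open>h_delta*\<close> is non-negative, the values \<open>h_delta*(T_i)\<close> strictly increase, so the sets \<open>T_i\<close>
  are distinct.
\<close>

lemma continuous_on_Min_image:
  fixes g :: "'i \<Rightarrow> 'a::topological_space \<Rightarrow> 'b::linorder_topology"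
  assumes "finite I" "I \<noteq> {}" "\<And>i. i \<in> I \<Longrightarrow> continuous_on A (g i)"
  shows "continuous_on A (\<lambda>x. Min ((\<lambda>i. g i x) ` I))"
  using assms
proof (induction I rule: finite_ne_induct)
  case (singleton i)
  then show ?case by simp
next
  case (insert i I)
  then show ?case
    by (simp add: Min_insert continuous_on_min)
qed

lemma continuous_on_fval:
  assumes "finite V"
  shows "continuous_on A (fval V h a)"
  unfolding fval_def hdelta_def using assms
  by (intro continuous_on_Min_image continuous_intros) auto

lemma fval_le_hdelta:
  assumes "finite V" "S \<subseteq> V"
  shows "fval V h a d \<le> hdelta h a d S"
  unfolding fval_def using assms by (intro Min_le) auto

lemma fval_minimizer:
  assumes "finite V" "is_minimizer V h a d S"
  shows "fval V h a d = hdelta h a d S"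
  unfolding fval_def using assms by (intro Min_eqI) (auto simp: is_minimizer_def)

lemma minimizer_exists:
  assumes "finite V"
  obtains S where "is_minimizer V h a d S"
proof -
  have "fval V h a d \<in> hdelta h a d ` Pow V"
    unfolding fval_def using assms by (intro Min_in) auto
  then obtain S where "S \<subseteq> V" "hdelta h a d S = fval V h a d"
    by auto
  then show thesis
    using that[of S] fval_le_hdelta[OF assms] by (auto simp: is_minimizer_def)
qed

lemma hdelta_minimizer:
  assumes "finite V" "is_minimizer V h a d S"
  shows "hdelta h a d' S = fval V h a d + (d - d') * asum a S"
  using fval_minimizer[OF assms] by (simp add: hdelta_def algebra_simps)

lemma nonneg_on_hdelta_iff:
  assumes "finite V"
  shows "nonneg_on V (hdelta h a d) \<longleftrightarrow> 0 \<le> fval V h a d"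
proof
  assume nonneg: "nonneg_on V (hdelta h a d)"
  obtain S where S: "is_minimizer V h a d S"
    using minimizer_exists[OF assms] .
  then have "0 \<le> hdelta h a d S"
    using nonneg by (simp add: nonneg_on_def is_minimizer_def)
  then show "0 \<le> fval V h a d"
    using fval_minimizer[OF assms S] by simp
next
  assume "0 \<le> fval V h a d"
  then show "nonneg_on V (hdelta h a d)"
    unfolding nonneg_on_def using fval_le_hdelta[OF assms] order_trans by blast
qed

lemma submodular_on_hdelta:
  assumes "finite V" "submodular_on V h"
  shows "submodular_on V (hdelta h a d)"
  unfolding submodular_on_def
proof (intro allI impI)
  fix X Y
  assume XY: "X \<subseteq> V" "Y \<subseteq> V"
  then have "asum a (X \<union> Y) + asum a (X \<inter> Y) = asum a X + asum a Y"
    unfolding asum_def using assms(1) by (intro sum.union_inter) (auto intro: finite_subset)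
  then have "d * asum a (X \<union> Y) + d * asum a (X \<inter> Y) = d * asum a X + d * asum a Y"
    by (simp add: distrib_left[symmetric])
  moreover have "h (X \<union> Y) + h (X \<inter> Y) \<le> h X + h Y"
    using assms(2) XY by (auto simp: submodular_on_def)
  ultimately show "hdelta h a d (X \<union> Y) + hdelta h a d (X \<inter> Y) \<le> hdelta h a d X + hdelta h a d Y"
    unfolding hdelta_def by linarith
qed

lemma minimizer_asum_mono:
  assumes "d < d'" "is_minimizer V h a d T" "is_minimizer V h a d' T'"
  shows "asum a T \<le> asum a T'"
proof -
  have "hdelta h a d T \<le> hdelta h a d T'" "hdelta h a d' T' \<le> hdelta h a d' T"
    using assms by (auto simp: is_minimizer_def)
  then have "(d' - d) * asum a T \<le> (d' - d) * asum a T'"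
    by (simp add: hdelta_def algebra_simps)
  then show ?thesis
    using assms(1) by simp
qed

lemma minimizer_asum_pos:
  assumes "finite V" "nonneg_on V h" "0 \<le> d" "fval V h a d < 0" "is_minimizer V h a d T"
  shows "0 < asum a T"
proof -
  have "0 \<le> h T"
    using assms(2,5) by (auto simp: nonneg_on_def is_minimizer_def)
  moreover have "h T - d * asum a T < 0"
    using assms(4) fval_minimizer[OF assms(1,5)] by (simp add: hdelta_def)
  ultimately have "0 < d * asum a T"
    by simp
  then show ?thesis
    using assms(3) by (simp add: zero_less_mult_iff)
qed

lemma fval_newton_nonpos:
  assumes "finite V" "is_minimizer V h a d T" "asum a T \<noteq> 0"
  shows "fval V h a (d + fval V h a d / asum a T) \<le> 0"
proof -
  have "fval V h a (d + fval V h a d / asum a T) \<le> hdelta h a (d + fval V h a d / asum a T) T"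
    using assms(1,2) by (intro fval_le_hdelta) (auto simp: is_minimizer_def)
  also have "\<dots> = 0"
    using hdelta_minimizer[OF assms(1,2)] assms(3) by simp
  finally show ?thesis .
qed

text \<open>Here \<open>s\<close> is the slope \<open>-g\<close> at \<open>d\<close>, so \<open>d + 2 f(d) / s\<close> is the look-ahead point.\<close>
lemma look_ahead_asum_halves:
  assumes "finite V" "0 < s" "fval V h a d < 0"
    and "fval V h a (d + 2 * fval V h a d / s) < 0"
    and "is_minimizer V h a (d + 2 * fval V h a d / s) T"
  shows "2 * asum a T < s"
proof -
  have "fval V h a d \<le> hdelta h a d T"
    using assms(1,5) by (intro fval_le_hdelta) (auto simp: is_minimizer_def)
  also have "\<dots> = fval V h a (d + 2 * fval V h a d / s) + 2 * fval V h a d / s * asum a T"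
    using hdelta_minimizer[OF assms(1,5)] by simp
  also have "\<dots> < 2 * fval V h a d / s * asum a T"
    using assms(4) by simp
  finally have "fval V h a d * s < fval V h a d * (2 * asum a T)"
    using assms(2) by (simp add: field_simps)
  then show ?thesis
    using assms(3) by (simp add: mult_less_cancel_left_neg)
qed

lemma fval_neg_above_roots:
  assumes "finite V" "\<exists>i\<in>V. 0 < a i" "\<And>d. fval V h a d = 0 \<Longrightarrow> d \<le> r" "r < x"
  shows "fval V h a x < 0"
proof (rule ccontr)
  assume "\<not> fval V h a x < 0"
  then have fx: "0 \<le> fval V h a x"
    by simp
  obtain i where i: "i \<in> V" "0 < a i"
    using assms(2) by blast
  define y where "y = max x (h {i} / a i)"
  have "h {i} = h {i} / a i * a i"
    using i by simp
  also have "\<dots> \<le> y * a i"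
    using i by (intro mult_right_mono) (auto simp: y_def)
  finally have "fval V h a y \<le> 0"
    using fval_le_hdelta[OF assms(1), of "{i}" h a y] i by (simp add: hdelta_def asum_def)
  moreover have "x \<le> y"
    by (simp add: y_def)
  ultimately obtain z where "x \<le> z" "fval V h a z = 0"
    using IVT2'[of "fval V h a" y 0 x] fx continuous_on_fval[OF assms(1)] by blast
  then show False
    using assms(3,4) by force
qed

lemma strict_mono_on_atLeastAtMost_SucI:
  fixes g :: "nat \<Rightarrow> 'a::order"
  assumes "\<And>i. i \<in> {m..<n} \<Longrightarrow> g i < g (Suc i)"
  shows "strict_mono_on {m..n} g"
  by (rule strict_mono_onI) (auto intro: lift_Suc_mono_less_ivl[where N = "{m..<n}"] assms)

locale lnd_analysis =
  fixes V :: "'v set" and h :: "'v set \<Rightarrow> real" and a :: "'v \<Rightarrow> real"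
    and dstar :: real and l :: nat and ds gs :: "nat \<Rightarrow> real" and S :: "nat \<Rightarrow> 'v set"
  assumes finite_V: "finite V"
    and h_nonneg: "nonneg_on V h"
    and a_pos: "\<exists>i\<in>V. 0 < a i"
    and root: "fval V h a dstar = 0"
    and largest_root: "\<And>d. fval V h a d = 0 \<Longrightarrow> d \<le> dstar"
    and run: "lnd_run V h a l ds gs"
    and ds_decreasing: "\<And>i j. 1 \<le> i \<Longrightarrow> i < j \<Longrightarrow> j \<le> l \<Longrightarrow> ds j < ds i"
    and ds_last: "ds l = dstar"
    and S_minimizer: "\<And>i. 1 \<le> i \<Longrightarrow> i \<le> l \<Longrightarrow> is_minimizer V h a (ds i) (S i)"
    and S_max_asum: "\<And>i T. 1 \<le> i \<Longrightarrow> i \<le> l \<Longrightarrow> is_minimizer V h a (ds i) T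
      \<Longrightarrow> asum a T \<le> asum a (S i)"
begin

abbreviation f :: "real \<Rightarrow> real" where
  "f \<equiv> fval V h a"

definition newton_point :: "nat \<Rightarrow> real" where
  "newton_point k = ds k - f (ds k) / gs k"

lemma fval_neg_above_dstar: "dstar < d \<Longrightarrow> f d < 0"
  using fval_neg_above_roots[OF finite_V a_pos largest_root] .

lemma dstar_nonneg: "0 \<le> dstar"
proof (rule ccontr)
  assume "\<not> 0 \<le> dstar"
  then have "f 0 < 0"
    by (intro fval_neg_above_dstar) simp
  then show False
    using nonneg_on_hdelta_iff[OF finite_V, of h a 0] h_nonneg by (simp add: hdelta_def[abs_def])
qed

lemma initial_point:
  obtains i where "i \<in> V" "0 < a i" "ds 1 = h {i} / a i"
proof -
  have "{h {i} / a i | i. i \<in> V \<and> 0 < a i} = (\<lambda>i. h {i} / a i) ` {i \<in> V. 0 < a i}"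
    by auto
  then have "ds 1 = Min ((\<lambda>i. h {i} / a i) ` {i \<in> V. 0 < a i})"
    using run by (simp add: lnd_run_def)
  moreover have "Min ((\<lambda>i. h {i} / a i) ` {i \<in> V. 0 < a i}) \<in> (\<lambda>i. h {i} / a i) ` {i \<in> V. 0 < a i}"
    using finite_V a_pos by (intro Min_in) auto
  ultimately show thesis
    using that by auto
qed

lemma fval_iterate_nonzero: "1 \<le> k \<Longrightarrow> k < l \<Longrightarrow> f (ds k) \<noteq> 0"
  using run by (simp add: lnd_run_def)

lemma initial_supergradient:
  assumes "f (ds 1) \<noteq> 0"
  obtains T where "is_minimizer V h a (ds 1) T" "gs 1 = - asum a T"
  using run assms by (auto simp: lnd_run_def)

lemma lnd_step_cases:
  assumes "1 \<le> k" "k < l"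
  obtains (look_ahead) T' where "is_minimizer V h a (2 * newton_point k - ds k) T'"
      "f (2 * newton_point k - ds k) < 0" "0 < asum a T'"
      "ds (Suc k) = 2 * newton_point k - ds k" "gs (Suc k) = - asum a T'"
  | (newton) T T' where "is_minimizer V h a (newton_point k) T"
      "is_minimizer V h a (2 * newton_point k - ds k) T'"
      "\<not> (f (2 * newton_point k - ds k) < 0 \<and> 0 < asum a T')"
      "f (newton_point k) < 0 \<Longrightarrow> 0 < asum a T"
      "ds (Suc k) = newton_point k" "gs (Suc k) = - asum a T"
proof -
  obtain T T' where
    "is_minimizer V h a (newton_point k) T" "is_minimizer V h a (2 * newton_point k - ds k) T'"
    "\<not> (f (newton_point k) < 0 \<and> 0 \<le> - asum a T)"
    "if f (2 * newton_point k - ds k) < 0 \<and> - asum a T' < 0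
     then ds (Suc k) = 2 * newton_point k - ds k \<and> gs (Suc k) = - asum a T'
     else ds (Suc k) = newton_point k \<and> gs (Suc k) = - asum a T"
    using run assms unfolding lnd_run_def Let_def newton_point_def by force
  then show thesis
    using that by (cases "f (2 * newton_point k - ds k) < 0 \<and> 0 < asum a T'") auto
qed

lemma iterate_invariant:
  "1 \<le> k \<Longrightarrow> k < l \<Longrightarrow>
    f (ds k) < 0 \<and> (\<exists>T. is_minimizer V h a (ds k) T \<and> 0 < asum a T \<and> gs k = - asum a T)"
proof (induction k rule: nat_induct_at_least)
  case base
  obtain i where i: "i \<in> V" "0 < a i" "ds 1 = h {i} / a i"
    using initial_point .
  have "f (ds 1) \<le> hdelta h a (ds 1) {i}"
    using finite_V i by (intro fval_le_hdelta) auto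
  also have "\<dots> = 0"
    using i by (simp add: hdelta_def asum_def)
  moreover have f_nonzero: "f (ds 1) \<noteq> 0"
    using fval_iterate_nonzero base by simp
  ultimately have f_neg: "f (ds 1) < 0"
    by linarith
  obtain T where T: "is_minimizer V h a (ds 1) T" "gs 1 = - asum a T"
    using initial_supergradient[OF f_nonzero] .
  have "0 \<le> h {i}"
    using i h_nonneg by (simp add: nonneg_on_def)
  then have "0 \<le> ds 1"
    using i by simp
  then have "0 < asum a T"
    using minimizer_asum_pos[OF finite_V h_nonneg _ f_neg T(1)] by simp
  then show ?case
    using f_neg T by blast
next
  case (Suc k)
  then have k: "k < l"
    by simp
  obtain T where T: "is_minimizer V h a (ds k) T" "0 < asum a T" "gs k = - asum a T"
    using Suc.IH[OF k] by blast
  have f_nonzero: "f (ds (Suc k)) \<noteq> 0"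
    using fval_iterate_nonzero Suc.hyps Suc.prems by simp
  from Suc.hyps k show ?case
  proof (cases rule: lnd_step_cases)
    case (look_ahead T')
    then show ?thesis
      by auto
  next
    case (newton T1 T')
    have "f (newton_point k) \<le> 0"
      using fval_newton_nonpos[OF finite_V T(1)] T(2,3) by (simp add: newton_point_def)
    then have "f (newton_point k) < 0"
      using f_nonzero newton(5) by simp
    then show ?thesis
      using newton by auto
  qed
qed

lemma fval_iterate_neg: "1 \<le> k \<Longrightarrow> k < l \<Longrightarrow> f (ds k) < 0"
  using iterate_invariant by blast

lemma supergradient_minimizer:
  assumes "1 \<le> k" "k < l"
  obtains T where "is_minimizer V h a (ds k) T" "0 < asum a T" "gs k = - asum a T"
  using iterate_invariant[OF assms] by blast

lemma supergradient_neg: "1 \<le> k \<Longrightarrow> k < l \<Longrightarrow> gs k < 0"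
  by (metis supergradient_minimizer neg_less_0_iff_less)

lemma supergradient_ge_S: "1 \<le> k \<Longrightarrow> k < l \<Longrightarrow> - gs k \<le> asum a (S k)"
  by (metis supergradient_minimizer S_max_asum less_imp_le minus_minus)

lemma asum_S_Suc_le_supergradient:
  assumes "1 \<le> k" "k < l"
  shows "asum a (S (Suc k)) \<le> - gs k"
proof -
  obtain T where T: "is_minimizer V h a (ds k) T" "gs k = - asum a T"
    using supergradient_minimizer[OF assms] by blast
  have "ds (Suc k) < ds k"
    using ds_decreasing assms by simp
  from minimizer_asum_mono[OF this S_minimizer T(1)] assms T(2) show ?thesis
    by simp
qed

lemma supergradient_mono:
  assumes "1 \<le> k" "Suc k < l"
  shows "- gs (Suc k) \<le> - gs k"
proof -
  obtain T where T: "is_minimizer V h a (ds k) T" "gs k = - asum a T"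
    using supergradient_minimizer assms by (metis Suc_lessD)
  obtain T' where T': "is_minimizer V h a (ds (Suc k)) T'" "gs (Suc k) = - asum a T'"
    using supergradient_minimizer assms by (metis le_SucI)
  have "ds (Suc k) < ds k"
    using ds_decreasing assms by simp
  from minimizer_asum_mono[OF this T'(1) T(1)] T(2) T'(2) show ?thesis
    by simp
qed

lemma dstar_le_ds: "1 \<le> k \<Longrightarrow> k \<le> l \<Longrightarrow> dstar \<le> ds k"
  using ds_decreasing ds_last by (metis order.order_iff_strict)

lemma newton_point_le_ds: "1 \<le> k \<Longrightarrow> k < l \<Longrightarrow> newton_point k \<le> ds k"
  using fval_iterate_neg supergradient_neg
  by (simp add: newton_point_def divide_neg_neg less_imp_le)

lemma ds_Suc_le_newton_point:
  assumes "1 \<le> k" "k < l"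
  shows "ds (Suc k) \<le> newton_point k"
  using assms
proof (cases rule: lnd_step_cases)
  case (look_ahead T')
  then show ?thesis
    using newton_point_le_ds[OF assms] by simp
qed simp

lemma gap_slope_halves:
  assumes "1 \<le> k" "Suc k < l"
  shows "2 * ((ds (Suc k) - dstar) * - gs (Suc k)) \<le> (ds k - dstar) * - gs k"
proof -
  have k: "k < l"
    using assms by simp
  have gap_Suc: "0 \<le> ds (Suc k) - dstar" "ds (Suc k) - dstar \<le> ds k - dstar"
    using dstar_le_ds[of "Suc k"] ds_decreasing[of k "Suc k"] assms by auto
  have slope: "0 < - gs k" "0 < - gs (Suc k)" "- gs (Suc k) \<le> - gs k"
    using supergradient_neg[OF assms(1) k] supergradient_neg[of "Suc k"] supergradient_mono[OF assms]
      assms by auto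
  from assms(1) k show ?thesis
  proof (cases rule: lnd_step_cases)
    case (look_ahead T')
    have "2 * newton_point k - ds k = ds k + 2 * f (ds k) / - gs k"
      by (simp add: newton_point_def)
    then have "2 * asum a T' < - gs k"
      using look_ahead_asum_halves[OF finite_V slope(1) fval_iterate_neg[OF assms(1) k]]
        look_ahead(1,2) by simp
    then have "2 * - gs (Suc k) \<le> - gs k"
      using look_ahead by simp
    then have "(ds (Suc k) - dstar) * (2 * - gs (Suc k)) \<le> (ds k - dstar) * - gs k"
      using gap_Suc slope by (intro mult_mono) auto
    then show ?thesis
      by (simp add: algebra_simps)
  next
    case (newton T T')
    have "2 * newton_point k - ds k \<le> dstar"
    proof (rule ccontr)
      assume "\<not> 2 * newton_point k - ds k \<le> dstar"
      then have "f (2 * newton_point k - ds k) < 0" "0 \<le> 2 * newton_point k - ds k"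
        using fval_neg_above_dstar dstar_nonneg by auto
      with minimizer_asum_pos[OF finite_V h_nonneg] newton(2,3) show False
        by blast
    qed
    then have "2 * (ds (Suc k) - dstar) \<le> ds k - dstar"
      using newton(5) by simp
    then have "2 * (ds (Suc k) - dstar) * - gs (Suc k) \<le> (ds k - dstar) * - gs k"
      using gap_Suc slope by (intro mult_mono) auto
    then show ?thesis
      by (simp add: algebra_simps)
  qed
qed

lemma hdelta_S_eq:
  "1 \<le> k \<Longrightarrow> k \<le> l \<Longrightarrow> hdelta h a dstar (S k) = f (ds k) + (ds k - dstar) * asum a (S k)"
  using hdelta_minimizer[OF finite_V S_minimizer] by simp

lemma hdelta_S_nonneg: "1 \<le> k \<Longrightarrow> k \<le> l \<Longrightarrow> 0 \<le> hdelta h a dstar (S k)"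
  using nonneg_on_hdelta_iff[OF finite_V, of h a dstar] root S_minimizer
  by (simp add: nonneg_on_def is_minimizer_def)

lemma hdelta_S_lower:
  assumes "1 \<le> k" "k < l"
  shows "(ds (Suc k) - dstar) * - gs k \<le> hdelta h a dstar (S k)"
proof -
  have slope: "0 < - gs k"
    using supergradient_neg[OF assms] by simp
  have "(ds (Suc k) - dstar) * - gs k \<le> (newton_point k - dstar) * - gs k"
    using ds_Suc_le_newton_point[OF assms] slope by (intro mult_right_mono) auto
  also have "\<dots> = f (ds k) + (ds k - dstar) * - gs k"
    using slope by (simp add: newton_point_def field_simps)
  also have "\<dots> \<le> f (ds k) + (ds k - dstar) * asum a (S k)"
    using dstar_le_ds[of k] supergradient_ge_S[OF assms] assms
    by (intro add_left_mono mult_left_mono) auto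
  also have "\<dots> = hdelta h a dstar (S k)"
    using hdelta_S_eq assms by simp
  finally show ?thesis .
qed

lemma hdelta_S_Suc_upper:
  assumes "1 \<le> k" "k < l"
  shows "hdelta h a dstar (S (Suc k)) \<le> (ds (Suc k) - dstar) * - gs k"
proof -
  have "hdelta h a dstar (S (Suc k)) = f (ds (Suc k)) + (ds (Suc k) - dstar) * asum a (S (Suc k))"
    using hdelta_S_eq assms by simp
  also have "\<dots> \<le> (ds (Suc k) - dstar) * asum a (S (Suc k))"
    using fval_iterate_neg[of "Suc k"] root ds_last assms by (cases "Suc k = l") auto
  also have "\<dots> \<le> (ds (Suc k) - dstar) * - gs k"
    using dstar_le_ds[of "Suc k"] asum_S_Suc_le_supergradient[OF assms] assms
    by (intro mult_left_mono) auto
  finally show ?thesis .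
qed

lemma hdelta_S_four_steps:
  assumes "1 \<le> i" "i + 4 \<le> l"
  shows "4 * hdelta h a dstar (S (i + 4)) < hdelta h a dstar (S i)"
proof -
  have "hdelta h a dstar (S (i + 4)) \<le> (ds (i + 4) - dstar) * - gs (i + 3)"
    using hdelta_S_Suc_upper[of "i + 3"] assms by (simp add: numeral_eq_Suc)
  also have "\<dots> < (ds (i + 3) - dstar) * - gs (i + 3)"
    using ds_decreasing[of "i + 3" "i + 4"] supergradient_neg[of "i + 3"] assms by simp
  also have "2 * \<dots> \<le> (ds (i + 2) - dstar) * - gs (i + 2)"
    using gap_slope_halves[of "i + 2"] assms by (simp add: numeral_eq_Suc)
  also have "2 * \<dots> \<le> (ds (i + 1) - dstar) * - gs (i + 1)"
    using gap_slope_halves[of "i + 1"] assms by (simp add: numeral_eq_Suc)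
  also have "\<dots> \<le> (ds (i + 1) - dstar) * - gs i"
    using supergradient_mono[of i] dstar_le_ds[of "i + 1"] assms by (intro mult_left_mono) auto
  also have "\<dots> \<le> hdelta h a dstar (S i)"
    using hdelta_S_lower[of i] assms by simp
  finally show ?thesis
    by simp
qed


lemma every_fourth_growth:
  assumes "j \<in> {1..<(l + 3) div 4}"
  shows "4 * hdelta h a dstar (S (l - 4 * (j - 1))) < hdelta h a dstar (S (l - 4 * (Suc j - 1)))"
proof -
  have "1 \<le> j" "4 * j + 1 \<le> l"
    using assms by auto
  moreover from this have "l - 4 * (j - 1) = l - 4 * j + 4"
    by presburger
  ultimately show ?thesis
    using hdelta_S_four_steps[of "l - 4 * j"] by simp
qed

lemma every_fourth_inj: "inj_on (\<lambda>j. S (l - 4 * (j - 1))) {1..(l + 3) div 4}"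
proof -
  have "strict_mono_on {1..(l + 3) div 4} (hdelta h a dstar \<circ> (\<lambda>j. S (l - 4 * (j - 1))))"
  proof (rule strict_mono_on_atLeastAtMost_SucI)
    fix j
    assume j: "j \<in> {1..<(l + 3) div 4}"
    then have "0 \<le> hdelta h a dstar (S (l - 4 * (j - 1)))"
      by (intro hdelta_S_nonneg) auto
    then show "(hdelta h a dstar \<circ> (\<lambda>j. S (l - 4 * (j - 1)))) j
        < (hdelta h a dstar \<circ> (\<lambda>j. S (l - 4 * (j - 1)))) (Suc j)"
      using every_fourth_growth[OF j] by simp
  qed
  then show ?thesis
    using strict_mono_on_imp_inj_on inj_on_imageI2 by blast
qed

end

theorem lemma5p4:
  fixes V :: "'v set" and h :: "'v set \<Rightarrow> real" and a :: "'v \<Rightarrow> real"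
    and dstar :: real and l :: nat and ds gs :: "nat \<Rightarrow> real" and S :: "nat \<Rightarrow> 'v set"
  assumes finV: "finite V"
    and hnonneg: "nonneg_on V h"
    and hsub: "submodular_on V h"
    and apos: "\<exists>i\<in>V. 0 < a i"
    and root: "fval V h a dstar = 0"
    and largest: "\<forall>d. fval V h a d = 0 \<longrightarrow> d \<le> dstar"
    and run: "lnd_run V h a l ds gs"
    and decr: "\<forall>i j. 1 \<le> i \<longrightarrow> i < j \<longrightarrow> j \<le> l \<longrightarrow> ds j < ds i"
    and last: "ds l = dstar"
    and Sdef: "\<forall>i\<in>{1..l}. is_minimizer V h a (ds i) (S i) \<and>
                 (\<forall>T. is_minimizer V h a (ds i) T \<longrightarrow> asum a T \<le> asum a (S i))"
  shows "nonneg_on V (hdelta h a dstar) \<and> submodular_on V (hdelta h a dstar) \<and>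
         (let q = (l + 3) div 4; T = (\<lambda>i. S (l - 4 * (i - 1))) in
            inj_on T {1..q} \<and>
            (\<forall>i\<in>{1..<q}. hdelta h a dstar (T (Suc i)) > 4 * hdelta h a dstar (T i)))"
proof -
  interpret lnd_analysis V h a dstar l ds gs S
    using assms by unfold_locales auto
  show ?thesis
    using every_fourth_inj every_fourth_growth nonneg_on_hdelta_iff[OF finV]
      submodular_on_hdelta[OF finV hsub] root
    unfolding Let_def by simp
qed

end
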